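(* Assume (R). For every $n\ge0$, $$A_n(x)=(2x-1)^{\delta_n}\,F_n\big(x(x-1)\big).$$ Moreover $f_{n,0}=(-1)^n\alpha_n$ and $f_{n,d_n}=2^{-\delta_n}\alpha_0$; furthermore $$A_n(\phi)=(\sqrt5)^{\delta_n}F_n(1),\qquad \sum_{\nu=0}^{n}\binom{n}{\nu}\alpha_{n-\nu}\Phi_\nu=\begin{cases}2F_n(1),& n\text{ odd},\\ 0,& n\text{ even}.\end{cases}$$
   Context: Let $(\alpha_n)_{n\ge0}$ be an arbitrary sequence of complex numbers with Appell polynomials $A_n(x)=\sum_{\nu=0}^{n}\binom{n}{\nu}\alpha_{n-\nu}x^\nu$; property (R) means $A_n(1-x)=(-1)^nA_n(x)$ for all $n\ge0$. Let $S_n(x)=\sum_{k=0}^n s_{n,k}x^k$ with $s_{n,k}=\sum_{\nu=k}^{n}\binom{n}{\nu}\binom{\nu}{k}\alpha_\nu$. For $n\ge0$ let $d_n=\lfloor n/2\rfloor$, $\delta_n=1$ if $n$ odd and $0$ otherwise. The Faulhaber-type polynomial is $F_n(u)=\sum_{k\ge0}f_{n,k}u^k$ with $f_{n,k}=2^{2k-n}\sum_{\nu=0}^{d_n-k}\binom{n}{2\nu}\binom{d_n-\nu}{k}S_{2\nu}(1)$ for $0\le k\le d_n$ and $f_{n,k}=0$ for $k>d_n$. $\phi=(1+\sqrt5)/2$ is the golden ratio and $\Phi_\nu=(\phi^\nu-(1-\phi)^\nu)/\sqrt5$ are the Fibonacci numbers. *)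

theory Defs
  imports Complex_Main
begin

definition appell :: "(nat \<Rightarrow> complex) \<Rightarrow> nat \<Rightarrow> complex \<Rightarrow> complex" where
  "appell \<alpha> n x = (\<Sum>\<nu>=0..n. of_nat (n choose \<nu>) * \<alpha> (n - \<nu>) * x ^ \<nu>)"

definition propR :: "(nat \<Rightarrow> complex) \<Rightarrow> bool" where
  "propR \<alpha> \<longleftrightarrow> (\<forall>n x. appell \<alpha> n (1 - x) = (-1) ^ n * appell \<alpha> n x)"

definition s_coef :: "(nat \<Rightarrow> complex) \<Rightarrow> nat \<Rightarrow> nat \<Rightarrow> complex" where
  "s_coef \<alpha> n k = (\<Sum>\<nu>=k..n. of_nat (n choose \<nu>) * of_nat (\<nu> choose k) * \<alpha> \<nu>)"

definition S_poly :: "(nat \<Rightarrow> complex) \<Rightarrow> nat \<Rightarrow> complex \<Rightarrow> complex" where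
  "S_poly \<alpha> n x = (\<Sum>k=0..n. s_coef \<alpha> n k * x ^ k)"

definition dn :: "nat \<Rightarrow> nat" where "dn n = n div 2"

definition deltan :: "nat \<Rightarrow> nat" where "deltan n = (if odd n then 1 else 0)"

definition f_coef :: "(nat \<Rightarrow> complex) \<Rightarrow> nat \<Rightarrow> nat \<Rightarrow> complex" where
  "f_coef \<alpha> n k = (if k \<le> dn n then
      (2::complex) powi (2 * int k - int n) *
      (\<Sum>\<nu>=0..dn n - k. of_nat (n choose (2*\<nu>)) * of_nat ((dn n - \<nu>) choose k) * S_poly \<alpha> (2*\<nu>) 1)
    else 0)"

definition F_poly :: "(nat \<Rightarrow> complex) \<Rightarrow> nat \<Rightarrow> complex \<Rightarrow> complex" where
  "F_poly \<alpha> n u = (\<Sum>k=0..dn n. f_coef \<alpha> n k * u ^ k)"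

definition golden :: real where "golden = (1 + sqrt 5) / 2"

definition Fib_real :: "nat \<Rightarrow> real" where
  "Fib_real \<nu> = (golden ^ \<nu> - (1 - golden) ^ \<nu>) / sqrt 5"

end

theory Submission
  imports Defs
begin

text \<open>By (R) at x = 1/2, A_m(1/2) = 0 for odd m, so the Taylor expansion of A_n about 1/2
  contains only the powers (x - 1/2)^(n - 2i) = (x - 1/2)^\<delta> ((x - 1/2)^2)^(d - i) with
  (x - 1/2)^2 = x(x - 1) + 1/4. Expanding binomially in u = x(x - 1) and using
  S_m(1) = 2^m A_m(1/2) yields exactly the coefficients f_{n,k}. The remaining claims are
  evaluations: x = 0 gives f_{n,0}; at x = \<phi> one has \<phi>(\<phi> - 1) = 1 and 2\<phi> - 1 = \<surd>5; and by
  Binet's formula the Fibonacci sum equals (A_n(\<phi>) - A_n(1 - \<phi>))/\<surd>5, to which (R) applies.\<close>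

lemma sum_atMost_nested_swap:
  fixes g :: "nat \<Rightarrow> nat \<Rightarrow> 'a::comm_monoid_add"
  shows "(\<Sum>k\<le>m. \<Sum>j=k..m. g k j) = (\<Sum>j\<le>m. \<Sum>k\<le>j. g k j)"
proof -
  have "(\<Sum>k\<le>m. \<Sum>j=k..m. g k j) = (\<Sum>k\<le>m. \<Sum>j\<in>{j\<in>{..m}. k \<le> j}. g k j)"
    by (intro sum.cong) auto
  also have "\<dots> = (\<Sum>j\<le>m. \<Sum>k\<in>{k\<in>{..m}. k \<le> j}. g k j)"
    by (rule sum.swap_restrict) auto
  also have "\<dots> = (\<Sum>j\<le>m. \<Sum>k\<le>j. g k j)"
    by (intro sum.cong) auto
  finally show ?thesis .
qed

lemma sum_atMost_triangle_swap:
  fixes g :: "nat \<Rightarrow> nat \<Rightarrow> 'a::comm_monoid_add"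
  shows "(\<Sum>i\<le>n. \<Sum>j\<le>n-i. g i j) = (\<Sum>j\<le>n. \<Sum>i\<le>n-j. g i j)"
proof -
  have "(\<Sum>i\<le>n. \<Sum>j\<le>n-i. g i j) = (\<Sum>i\<le>n. \<Sum>j\<in>{j\<in>{..n}. i + j \<le> n}. g i j)"
    by (intro sum.cong) auto
  also have "\<dots> = (\<Sum>j\<le>n. \<Sum>i\<in>{i\<in>{..n}. i + j \<le> n}. g i j)"
    by (rule sum.swap_restrict) auto
  also have "\<dots> = (\<Sum>j\<le>n. \<Sum>i\<le>n-j. g i j)"
    by (intro sum.cong) auto
  finally show ?thesis .
qed

lemma sum_atMost_even_indices:
  fixes g :: "nat \<Rightarrow> 'a::comm_monoid_add"
  assumes "\<And>j. odd j \<Longrightarrow> g j = 0"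
  shows "(\<Sum>j\<le>n. g j) = (\<Sum>i\<le>n div 2. g (2 * i))"
proof -
  have "(\<Sum>i\<le>n div 2. g (2 * i)) = (\<Sum>j\<in>(*) 2 ` {..n div 2}. g j)"
    by (subst sum.reindex) (auto simp: inj_on_def)
  also have "\<dots> = (\<Sum>j\<le>n. g j)"
  proof (rule sum.mono_neutral_left)
    show "\<forall>j\<in>{..n} - (*) 2 ` {..n div 2}. g j = 0"
    proof
      fix j assume j: "j \<in> {..n} - (*) 2 ` {..n div 2}"
      have "odd j"
      proof
        assume "even j"
        with j show False by (auto elim!: evenE)
      qed
      then show "g j = 0" by (rule assms)
    qed
  qed auto
  finally show ?thesis ..
qed

lemma sum_binomial_reverse:
  fixes f :: "nat \<Rightarrow> nat \<Rightarrow> 'a::comm_semiring_1"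
  shows "(\<Sum>k\<le>n. of_nat (n choose k) * f k (n - k)) = (\<Sum>k\<le>n. of_nat (n choose k) * f (n - k) k)"
  unfolding atLeast0AtMost[symmetric]
  by (subst sum.atLeastAtMost_rev) (auto intro!: sum.cong simp: binomial_symmetric[symmetric])

lemma appell_add:
  "appell \<alpha> n (a + b) = (\<Sum>k\<le>n. of_nat (n choose k) * appell \<alpha> (n - k) a * b ^ k)"
proof -
  define t where "t k j = of_nat (n choose j) * of_nat (j choose k) * \<alpha> (n - j) * a ^ (j - k) * b ^ k" for k j
  have "appell \<alpha> n (a + b) = (\<Sum>j\<le>n. \<Sum>k\<le>j. t k j)"
    unfolding appell_def atLeast0AtMost t_def binomial_ring add.commute[of a b] sum_distrib_left
    by (intro sum.cong refl) (simp only: mult_ac)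
  also have "\<dots> = (\<Sum>k\<le>n. \<Sum>j=k..n. t k j)"
    by (rule sum_atMost_nested_swap[symmetric])
  also have "\<dots> = (\<Sum>k\<le>n. \<Sum>i\<le>n-k. t k (i + k))"
  proof (rule sum.cong[OF refl])
    fix k assume "k \<in> {..n}"
    then have "{k..n} = {0 + k..(n - k) + k}" by simp
    then show "(\<Sum>j=k..n. t k j) = (\<Sum>i\<le>n-k. t k (i + k))"
      by (simp only: sum.shift_bounds_cl_nat_ivl atLeast0AtMost)
  qed
  also have "\<dots> = (\<Sum>k\<le>n. of_nat (n choose k) * appell \<alpha> (n - k) a * b ^ k)"
  proof (rule sum.cong[OF refl])
    fix k assume "k \<in> {..n}"
    then have "(n choose (i + k)) * ((i + k) choose k) = (n choose k) * ((n - k) choose i)"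
      if "i \<le> n - k" for i
      using choose_mult[of k "i + k" n] that by simp
    then show "(\<Sum>i\<le>n-k. t k (i + k)) = of_nat (n choose k) * appell \<alpha> (n - k) a * b ^ k"
      unfolding appell_def atLeast0AtMost sum_distrib_left sum_distrib_right t_def
      by (intro sum.cong refl) (simp add: diff_diff_add add.commute flip: of_nat_mult mult.assoc)
  qed
  finally show ?thesis .
qed

lemma appell_reverse: "appell \<alpha> n x = (\<Sum>k\<le>n. of_nat (n choose k) * \<alpha> k * x ^ (n - k))"
  using sum_binomial_reverse[of n "\<lambda>i j. \<alpha> j * x ^ i"]
  by (simp add: appell_def atLeast0AtMost mult.assoc)

lemma S_poly_at_1: "S_poly \<alpha> m 1 = 2 ^ m * appell \<alpha> m (1/2)"
proof -
  have "S_poly \<alpha> m 1 = (\<Sum>j\<le>m. \<Sum>k\<le>j. of_nat (m choose j) * of_nat (j choose k) * \<alpha> j)"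
    unfolding S_poly_def s_coef_def atLeast0AtMost by (simp add: sum_atMost_nested_swap)
  also have "\<dots> = (\<Sum>j\<le>m. of_nat (m choose j) * \<alpha> j * 2 ^ j)"
  proof (rule sum.cong[OF refl])
    fix j
    have "(\<Sum>k\<le>j. of_nat (j choose k) :: complex) = 2 ^ j"
      using arg_cong[OF choose_row_sum[of j], of "of_nat :: nat \<Rightarrow> complex"] by simp
    then show "(\<Sum>k\<le>j. of_nat (m choose j) * of_nat (j choose k) * \<alpha> j) = of_nat (m choose j) * \<alpha> j * 2 ^ j"
      by (simp add: sum_distrib_left[symmetric] sum_distrib_right[symmetric] mult_ac)
  qed
  also have "\<dots> = 2 ^ m * appell \<alpha> m (1/2)"
    unfolding appell_reverse sum_distrib_left
    by (rule sum.cong[OF refl]) (simp add: power_diff power_one_over)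
  finally show ?thesis .
qed

lemma appell_half_eq_0_if_odd:
  assumes "propR \<alpha>" and "odd m"
  shows "appell \<alpha> m (1/2) = 0"
proof -
  have "appell \<alpha> m (1 - 1/2) = (-1) ^ m * appell \<alpha> m (1/2)"
    using assms(1) unfolding propR_def by blast
  with assms(2) show ?thesis by simp
qed

lemma appell_about_half:
  assumes "propR \<alpha>"
  shows "appell \<alpha> n x =
    (\<Sum>i\<le>dn n. of_nat (n choose (2 * i)) * appell \<alpha> (2 * i) (1/2) * (x - 1/2) ^ (n - 2 * i))"
proof -
  have "appell \<alpha> n x = (\<Sum>k\<le>n. of_nat (n choose k) * appell \<alpha> (n - k) (1/2) * (x - 1/2) ^ k)"
    using appell_add[of \<alpha> n "1/2" "x - 1/2"] by simp
  also have "\<dots> = (\<Sum>k\<le>n. of_nat (n choose k) * appell \<alpha> k (1/2) * (x - 1/2) ^ (n - k))"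
    using sum_binomial_reverse[of n "\<lambda>i j. appell \<alpha> j (1/2) * (x - 1/2) ^ i"] by (simp add: mult.assoc)
  also have "\<dots> = (\<Sum>i\<le>dn n. of_nat (n choose (2 * i)) * appell \<alpha> (2 * i) (1/2) * (x - 1/2) ^ (n - 2 * i))"
    unfolding dn_def by (rule sum_atMost_even_indices) (simp add: appell_half_eq_0_if_odd[OF assms])
  finally show ?thesis .
qed

lemma dn_deltan: "n = 2 * dn n + deltan n"
  by (simp add: dn_def deltan_def)

lemma power_x_minus_half_expansion:
  fixes x :: complex
  assumes "i \<le> dn n"
  shows "(x - 1/2) ^ (n - 2 * i) = (2 * x - 1) ^ deltan n *
    (\<Sum>k\<le>dn n - i. of_nat ((dn n - i) choose k) * 2 powi (2 * int k + 2 * int i - int n) * (x * (x - 1)) ^ k)"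
proof -
  define j where "j = dn n - i"
  have n: "n - 2 * i = deltan n + 2 * j"
    using assms dn_deltan[of n] by (simp add: j_def)
  have scale: "(1/2) ^ deltan n * (1/4) ^ (j - k) = (2::complex) powi (2 * int k + 2 * int i - int n)"
    if "k \<le> j" for k
  proof -
    have "2 * int k + 2 * int i - int n = - int (deltan n + 2 * (j - k))"
      using that assms dn_deltan[of n] by (simp add: j_def)
    then have "(2::complex) powi (2 * int k + 2 * int i - int n) = inverse (2 ^ (deltan n + 2 * (j - k)))"
      by (simp only: power_int_minus power_int_of_nat)
    then show ?thesis
      by (simp add: power_add power_mult power_one_over inverse_eq_divide)
  qed
  have "(x - 1/2) ^ (n - 2 * i) = ((2 * x - 1) / 2) ^ deltan n * (x * (x - 1) + 1/4) ^ j"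
  proof -
    have half: "x - 1/2 = (2 * x - 1) / 2" and square: "(x - 1/2) ^ 2 = x * (x - 1) + 1/4"
      by (simp_all add: field_simps power2_eq_square)
    show ?thesis unfolding n power_add power_mult square unfolding half ..
  qed
  also have "\<dots> = (2 * x - 1) ^ deltan n *
      (\<Sum>k\<le>j. of_nat (j choose k) * ((1/2) ^ deltan n * (1/4) ^ (j - k)) * (x * (x - 1)) ^ k)"
    unfolding binomial_ring power_divide sum_distrib_left
    by (rule sum.cong[OF refl]) (simp add: power_one_over field_simps)
  also have "\<dots> = (2 * x - 1) ^ deltan n *
      (\<Sum>k\<le>j. of_nat (j choose k) * 2 powi (2 * int k + 2 * int i - int n) * (x * (x - 1)) ^ k)"
    by (intro arg_cong[where f = "\<lambda>s. (2 * x - 1) ^ deltan n * s"] sum.cong refl)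
       (simp only: scale atMost_iff)
  finally show ?thesis unfolding j_def .
qed

lemma appell_eq_F_poly:
  assumes "propR \<alpha>"
  shows "appell \<alpha> n x = (2 * x - 1) ^ deltan n * F_poly \<alpha> n (x * (x - 1))"
proof -
  define d where "d = dn n"
  define T where "T i k = of_nat (n choose (2 * i)) * of_nat ((d - i) choose k) *
    2 powi (2 * int k - int n) * S_poly \<alpha> (2 * i) 1 * (x * (x - 1)) ^ k" for i k
  have "appell \<alpha> n x = (\<Sum>i\<le>d. of_nat (n choose (2 * i)) * appell \<alpha> (2 * i) (1/2) * (x - 1/2) ^ (n - 2 * i))"
    unfolding d_def by (rule appell_about_half[OF assms])
  also have "\<dots> = (2 * x - 1) ^ deltan n * (\<Sum>i\<le>d. \<Sum>k\<le>d - i. T i k)"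
    unfolding sum_distrib_left
  proof (rule sum.cong[OF refl])
    fix i assume "i \<in> {..d}"
    then have power: "(x - 1/2) ^ (n - 2 * i) = (2 * x - 1) ^ deltan n *
      (\<Sum>k\<le>d - i. of_nat ((d - i) choose k) * 2 powi (2 * int k + 2 * int i - int n) * (x * (x - 1)) ^ k)"
      unfolding d_def by (simp add: power_x_minus_half_expansion)
    have scale: "(2::complex) powi (2 * int k + 2 * int i - int n) = 2 powi (2 * int k - int n) * 2 ^ (2 * i)" for k
      using power_int_add[of "2::complex" "2 * int k - int n" "int (2 * i)"] power_int_of_nat[of "2::complex" "2 * i"]
      by (simp add: algebra_simps)
    show "of_nat (n choose (2 * i)) * appell \<alpha> (2 * i) (1/2) * (x - 1/2) ^ (n - 2 * i) =
        (\<Sum>k\<le>d - i. (2 * x - 1) ^ deltan n * T i k)"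
      unfolding T_def S_poly_at_1 power scale sum_distrib_left by (intro sum.cong refl) (simp only: mult_ac)
  qed
  also have "(\<Sum>i\<le>d. \<Sum>k\<le>d - i. T i k) = (\<Sum>k\<le>d. \<Sum>i\<le>d - k. T i k)"
    by (rule sum_atMost_triangle_swap)
  also have "\<dots> = F_poly \<alpha> n (x * (x - 1))"
    unfolding F_poly_def atLeast0AtMost d_def[symmetric]
  proof (rule sum.cong[OF refl])
    fix k assume "k \<in> {..d}"
    then show "(\<Sum>i\<le>d - k. T i k) = f_coef \<alpha> n k * (x * (x - 1)) ^ k"
      unfolding f_coef_def d_def[symmetric] atLeast0AtMost
      by (simp add: T_def sum_distrib_left sum_distrib_right mult_ac)
  qed
  finally show ?thesis .
qed

lemma appell_at_0: "appell \<alpha> n 0 = \<alpha> n"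
  unfolding appell_def atLeast0AtMost by (subst sum.atMost_shift) simp

lemma F_poly_at_0: "F_poly \<alpha> n 0 = f_coef \<alpha> n 0"
  unfolding F_poly_def atLeast0AtMost by (subst sum.atMost_shift) simp

lemma f_coef_0:
  assumes "propR \<alpha>"
  shows "f_coef \<alpha> n 0 = (-1) ^ n * \<alpha> n"
proof -
  have "(-1::complex) ^ deltan n = (-1) ^ n"
    by (simp add: deltan_def)
  then have "\<alpha> n = (-1) ^ n * f_coef \<alpha> n 0"
    using appell_eq_F_poly[OF assms, of n 0] by (simp add: appell_at_0 F_poly_at_0)
  then show ?thesis
    by (simp add: mult.assoc[symmetric] flip: power_mult_distrib)
qed

lemma f_coef_dn: "f_coef \<alpha> n (dn n) = 2 powi (- int (deltan n)) * \<alpha> 0"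
proof -
  have "2 * int (dn n) - int n = - int (deltan n)"
    using dn_deltan[of n] by linarith
  then show ?thesis
    by (simp add: f_coef_def S_poly_def s_coef_def)
qed

lemma golden_mult_golden_minus_1: "golden * (golden - 1) = 1"
  by (simp add: golden_def field_simps algebra_simps)

lemma two_golden_minus_1: "2 * golden - 1 = sqrt 5"
  by (simp add: golden_def field_simps)

lemma appell_golden:
  assumes "propR \<alpha>"
  shows "appell \<alpha> n (of_real golden) = of_real (sqrt 5) ^ deltan n * F_poly \<alpha> n 1"
proof -
  have "appell \<alpha> n (of_real golden) =
      of_real (2 * golden - 1) ^ deltan n * F_poly \<alpha> n (of_real (golden * (golden - 1)))"
    using appell_eq_F_poly[OF assms, of n "of_real golden"] by simp
  then show ?thesis
    by (simp only: golden_mult_golden_minus_1 two_golden_minus_1 of_real_1)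
qed

lemma sum_binomial_Fib_real:
  assumes "propR \<alpha>"
  shows "(\<Sum>\<nu>=0..n. of_nat (n choose \<nu>) * \<alpha> (n - \<nu>) * of_real (Fib_real \<nu>))
    = (if odd n then 2 * F_poly \<alpha> n 1 else 0)"
proof -
  define p where "p = (of_real golden :: complex)"
  define s where "s = (of_real (sqrt 5) :: complex)"
  have "(\<Sum>\<nu>=0..n. of_nat (n choose \<nu>) * \<alpha> (n - \<nu>) * of_real (Fib_real \<nu>))
      = (appell \<alpha> n p - appell \<alpha> n (1 - p)) / s"
    unfolding appell_def Fib_real_def p_def s_def
    by (simp add: sum_divide_distrib sum_subtractf[symmetric] algebra_simps diff_divide_distrib)
  also have "appell \<alpha> n (1 - p) = (-1) ^ n * appell \<alpha> n p"
    using assms unfolding propR_def by blast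
  also have "appell \<alpha> n p = s ^ deltan n * F_poly \<alpha> n 1"
    unfolding p_def s_def by (rule appell_golden[OF assms])
  finally show ?thesis
    by (simp add: s_def deltan_def)
qed

theorem mainTheorem13:
  fixes \<alpha> :: "nat \<Rightarrow> complex"
  assumes R: "propR \<alpha>"
  shows "(\<forall>n x. appell \<alpha> n x = (2 * x - 1) ^ deltan n * F_poly \<alpha> n (x * (x - 1)))
    \<and> (\<forall>n. f_coef \<alpha> n 0 = (-1) ^ n * \<alpha> n)
    \<and> (\<forall>n. f_coef \<alpha> n (dn n) = (2::complex) powi (- int (deltan n)) * \<alpha> 0)
    \<and> (\<forall>n. appell \<alpha> n (of_real golden) = (of_real (sqrt 5)) ^ deltan n * F_poly \<alpha> n 1)
    \<and> (\<forall>n. (\<Sum>\<nu>=0..n. of_nat (n choose \<nu>) * \<alpha> (n - \<nu>) * of_real (Fib_real \<nu>))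
            = (if odd n then 2 * F_poly \<alpha> n 1 else 0))"
  using appell_eq_F_poly[OF R] f_coef_0[OF R] f_coef_dn appell_golden[OF R] sum_binomial_Fib_real[OF R]
  by blast

end
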